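(* Let $V$ be a finite set of variables, let $D_{\mathit{ds}}$ be the causal ABA framework defined in the context, let $\sigma\in\{\text{preferred},\text{stable}\}$, let $S\in\sigma(D_{\mathit{ds}})$ and let $G(S)=(V,\{(u,v)\mid\mathit{arr}_{uv}\in S\})$. Then for all distinct $x,y\in V$ and all $\mathbf Z\subseteq V\setminus\{x,y\}$: $(x\perp\!\!\!\perp y\mid\mathbf Z)\in S$ if and only if $x$ and $y$ are d-separated given $\mathbf Z$ in $G(S)$.
   Context: ABA. An ABA framework is $D=(\mathcal L,\mathcal R,\mathcal A,\overline{\cdot})$ with sentences $\mathcal L$, rules $a_0\leftarrow a_1,\dots,a_n$ ($n\ge0$), assumptions $\mathcal A\subseteq\mathcal L$ and contrary function $\overline{\cdot}:\mathcal A\to\mathcal L$. $S\vdash q$ ($S\subseteq\mathcal A$) if there is a finite rooted labelled tree with root $q$, set of leaf labels $S$ or $S\cup\{\top\}$, and every inner node labelled by the head of a rule whose children are labelled by the distinct body elements (one child $\top$ for an empty body). $S$ attacks $T$ if some $S'\subseteq S$ derives $\overline a$ for some $a\in T$. Conflict-free: does not attack itself; $S$ defends $T$ if it attacks every attacker of $T$; admissible: conflict-free and self-defending; complete: admissible and contains every assumption set it defends; preferred: $\subseteq$-maximal complete; stable: admissible and attacks $\{a\}$ for every assumption $a\notin S$. Graphs. A path in a directed graph is a sequence of distinct nodes with consecutive nodes adjacent; an inner node $x_i$ of a path $x_1\dots x_n$ is a collider if $(x_{i-1},x_i)$ and $(x_{i+1},x_i)$ are edges; $z'$ is a descendant of $z$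 if there is a directed path from $z$ to $z'$. For a DAG $H$ and $\mathbf Z\subseteq V\setminus\{x,y\}$, an $x$-$y$-path is $\mathbf Z$-active if every collider on it is in $\mathbf Z$ or has a descendant in $\mathbf Z$, and every other node on it is not in $\mathbf Z$; $x,y$ are d-separated given $\mathbf Z$ if no $\mathbf Z$-active $x$-$y$-path exists. An $x$-$y$-collider-tree of a DAG $H$ is a subgraph $t$ of $H$ together with an $x$-$y$-path $p_t$ in $t$ such that every node of $t$ not on $p_t$ is a descendant of some collider of $p_t$; it is $\mathbf Z$-active if $p_t$ is $\mathbf Z$-active in the graph $(V,\text{edges of }t)$. The framework $D_{\mathit{ds}}$. Assumptions: $\mathit{arr}_{xy}$ for all ordered pairs of distinct $x,y\in V$; one $\mathit{noe}_{xy}=\mathit{noe}_{yx}$ per unordered pair; and independence assumptions $(x\perp\!\!\!\perp y\mid\mathbf Z)$ for all $\mathbf Z\subseteq V$, distinct $x,y\in V\setminus\mathbf Z$, with $(x\perp\!\!\!\perp y\mid\mathbf Z)$ identified with $(y\perp\!\!\!\perp x\mid\mathbf Z)$. Each assumption $a$ has its own distinct fresh contrary $\overline a$. Rules: (i) $\overline a\leftarrow b$ for distinct $a,b\in\{\mathit{arr}_{xy},\mathit{arr}_{yx},\mathit{noe}_{xy}\}$; (ii) for every sequence $x_1\dots x_k$ with consecutive elements distinct and $x_1=x_k$ and every $1\le i<k$: $\overline{\mathit{arr}_{x_ix_{i+1}}}\leftarrow\mathit{arr}_{x_1x_2},\dots,\mathit{arr}_{x_{k-1}x_k}$; (iii)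 $\mathit{dpath}_{xy}\leftarrow\mathit{arr}_{xy}$; $\mathit{dpath}_{xz}\leftarrow\mathit{dpath}_{xy},\mathit{arr}_{yz}$; $e_{xy}\leftarrow\mathit{arr}_{xy}$; $e_{xy}\leftarrow\mathit{arr}_{yx}$; $\overline{\mathit{noe}_{xy}}\leftarrow e_{xy}$; (iv) for all distinct $x,y$, $\mathbf Z\subseteq V\setminus\{x,y\}$ and every $\mathbf Z$-active $x$-$y$-collider-tree $t$ (of any DAG on $V$), the rule $\overline{(x\perp\!\!\!\perp y\mid\mathbf Z)}\leftarrow\{\mathit{arr}_{uv}\mid(u,v)\text{ an edge of }t\}$. *)

theory Defs
  imports Main
begin

inductive derivable :: "('s \<times> 's set) set \<Rightarrow> 's set \<Rightarrow> 's set \<Rightarrow> 's \<Rightarrow> bool"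
  for R :: "('s \<times> 's set) set" and As :: "'s set" and S :: "'s set" where
  leaf: "q \<in> S \<Longrightarrow> q \<in> As \<Longrightarrow> derivable R As S q"
| rule: "(q, B) \<in> R \<Longrightarrow> finite B \<Longrightarrow> (\<forall>b\<in>B. derivable R As S b) \<Longrightarrow> derivable R As S q"

definition attacks :: "('s \<times> 's set) set \<Rightarrow> 's set \<Rightarrow> ('s \<Rightarrow> 's) \<Rightarrow> 's set \<Rightarrow> 's set \<Rightarrow> bool" where
  "attacks R As ctr S T \<longleftrightarrow> (\<exists>a\<in>T. derivable R As S (ctr a))"

definition conflict_free :: "('s \<times> 's set) set \<Rightarrow> 's set \<Rightarrow> ('s \<Rightarrow> 's) \<Rightarrow> 's set \<Rightarrow> bool" where
  "conflict_free R As ctr S \<longleftrightarrow> \<not> attacks R As ctr S S"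

definition defends :: "('s \<times> 's set) set \<Rightarrow> 's set \<Rightarrow> ('s \<Rightarrow> 's) \<Rightarrow> 's set \<Rightarrow> 's set \<Rightarrow> bool" where
  "defends R As ctr S T \<longleftrightarrow>
     (\<forall>U. U \<subseteq> As \<longrightarrow> attacks R As ctr U T \<longrightarrow> attacks R As ctr S U)"

definition admissible :: "('s \<times> 's set) set \<Rightarrow> 's set \<Rightarrow> ('s \<Rightarrow> 's) \<Rightarrow> 's set \<Rightarrow> bool" where
  "admissible R As ctr S \<longleftrightarrow> S \<subseteq> As \<and> conflict_free R As ctr S \<and> defends R As ctr S S"

definition complete_ext :: "('s \<times> 's set) set \<Rightarrow> 's set \<Rightarrow> ('s \<Rightarrow> 's) \<Rightarrow> 's set \<Rightarrow> bool" where
  "complete_ext R As ctr S \<longleftrightarrow> admissible R As ctr S \<and>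
     (\<forall>T. T \<subseteq> As \<longrightarrow> defends R As ctr S T \<longrightarrow> T \<subseteq> S)"

definition preferred_ext :: "('s \<times> 's set) set \<Rightarrow> 's set \<Rightarrow> ('s \<Rightarrow> 's) \<Rightarrow> 's set \<Rightarrow> bool" where
  "preferred_ext R As ctr S \<longleftrightarrow> complete_ext R As ctr S \<and>
     \<not> (\<exists>S'. complete_ext R As ctr S' \<and> S \<subset> S')"

definition stable_ext :: "('s \<times> 's set) set \<Rightarrow> 's set \<Rightarrow> ('s \<Rightarrow> 's) \<Rightarrow> 's set \<Rightarrow> bool" where
  "stable_ext R As ctr S \<longleftrightarrow> admissible R As ctr S \<and>
     (\<forall>a\<in>As - S. attacks R As ctr S {a})"

definition is_path :: "('v \<times> 'v) set \<Rightarrow> 'v list \<Rightarrow> bool" where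
  "is_path E xs \<longleftrightarrow> xs \<noteq> [] \<and> distinct xs \<and>
     (\<forall>i. Suc i < length xs \<longrightarrow> (xs!i, xs!Suc i) \<in> E \<or> (xs!Suc i, xs!i) \<in> E)"

definition is_dir_path :: "('v \<times> 'v) set \<Rightarrow> 'v list \<Rightarrow> bool" where
  "is_dir_path E xs \<longleftrightarrow> xs \<noteq> [] \<and> distinct xs \<and>
     (\<forall>i. Suc i < length xs \<longrightarrow> (xs!i, xs!Suc i) \<in> E)"

definition descendant :: "('v \<times> 'v) set \<Rightarrow> 'v \<Rightarrow> 'v \<Rightarrow> bool" where
  "descendant E z z' \<longleftrightarrow> (\<exists>xs. is_dir_path E xs \<and> hd xs = z \<and> last xs = z')"

definition collider_at :: "('v \<times> 'v) set \<Rightarrow> 'v list \<Rightarrow> nat \<Rightarrow> bool" where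
  "collider_at E xs i \<longleftrightarrow> 0 < i \<and> Suc i < length xs \<and>
     (xs!(i-1), xs!i) \<in> E \<and> (xs!Suc i, xs!i) \<in> E"

definition active :: "('v \<times> 'v) set \<Rightarrow> 'v set \<Rightarrow> 'v list \<Rightarrow> bool" where
  "active E Z xs \<longleftrightarrow> (\<forall>i<length xs.
     (collider_at E xs i \<longrightarrow> (xs!i \<in> Z \<or> (\<exists>z\<in>Z. descendant E (xs!i) z))) \<and>
     (\<not> collider_at E xs i \<longrightarrow> xs!i \<notin> Z))"

definition d_separated :: "('v \<times> 'v) set \<Rightarrow> 'v \<Rightarrow> 'v \<Rightarrow> 'v set \<Rightarrow> bool" where
  "d_separated E x y Z \<longleftrightarrow>
     \<not> (\<exists>p. is_path E p \<and> hd p = x \<and> last p = y \<and> active E Z p)"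

definition is_dag :: "'v set \<Rightarrow> ('v \<times> 'v) set \<Rightarrow> bool" where
  "is_dag V E \<longleftrightarrow> E \<subseteq> V \<times> V \<and> acyclic E"

definition collider_tree :: "'v set \<Rightarrow> ('v \<times> 'v) set \<Rightarrow> 'v \<Rightarrow> 'v \<Rightarrow> 'v set \<Rightarrow> ('v \<times> 'v) set \<Rightarrow> 'v list \<Rightarrow> bool" where
  "collider_tree V EH x y Vt Et p \<longleftrightarrow>
     Vt \<subseteq> V \<and> Et \<subseteq> EH \<and> Et \<subseteq> Vt \<times> Vt \<and>
     is_path Et p \<and> set p \<subseteq> Vt \<and> hd p = x \<and> last p = y \<and>
     (\<forall>w\<in>Vt - set p. \<exists>i. collider_at Et p i \<and> descendant Et (p!i) w)"

definition active_collider_tree :: "'v set \<Rightarrow> ('v \<times> 'v) set \<Rightarrow> 'v \<Rightarrow> 'v \<Rightarrow> 'v set \<Rightarrow> 'v set \<Rightarrow> ('v \<times> 'v) set \<Rightarrow> 'v list \<Rightarrow> bool" where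
  "active_collider_tree V EH x y Z Vt Et p \<longleftrightarrow> collider_tree V EH x y Vt Et p \<and> active Et Z p"

text \<open>noe_xy = noe_yx is represented by Noe {x,y}; (x indep y | Z) = (y indep x | Z)
  is represented by Ind {x,y} Z.\<close>
datatype 'v asm = Arr 'v 'v | Noe "'v set" | Ind "'v set" "'v set"

datatype 'v sent = Asm "'v asm" | Ctr "'v asm" | DPath 'v 'v | Edge 'v 'v

definition ds_asms :: "'v set \<Rightarrow> 'v sent set" where
  "ds_asms V =
     {Asm (Arr x y) | x y. x \<in> V \<and> y \<in> V \<and> x \<noteq> y} \<union>
     {Asm (Noe {x, y}) | x y. x \<in> V \<and> y \<in> V \<and> x \<noteq> y} \<union>
     {Asm (Ind {x, y} Z) | x y Z. Z \<subseteq> V \<and> x \<in> V - Z \<and> y \<in> V - Z \<and> x \<noteq> y}"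

fun ds_ctr :: "'v sent \<Rightarrow> 'v sent" where
  "ds_ctr (Asm a) = Ctr a"
| "ds_ctr s = s"

definition arr_body :: "('v \<times> 'v) set \<Rightarrow> 'v sent set" where
  "arr_body Et = {Asm (Arr u v) | u v. (u, v) \<in> Et}"

definition ds_rules :: "'v set \<Rightarrow> ('v sent \<times> 'v sent set) set" where
  "ds_rules V =
     \<comment> \<open>(i)\<close>
     {(Ctr a, {Asm b}) | x y a b. x \<in> V \<and> y \<in> V \<and> x \<noteq> y \<and>
        a \<in> {Arr x y, Arr y x, Noe {x, y}} \<and> b \<in> {Arr x y, Arr y x, Noe {x, y}} \<and> a \<noteq> b} \<union>
     \<comment> \<open>(ii) cycles x_1 ... x_k with x_1 = x_k\<close>
     {(Ctr (Arr (xs!i) (xs!Suc i)), {Asm (Arr (xs!j) (xs!Suc j)) | j. Suc j < length xs}) | xs i.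
        set xs \<subseteq> V \<and> xs \<noteq> [] \<and> hd xs = last xs \<and>
        (\<forall>j. Suc j < length xs \<longrightarrow> xs!j \<noteq> xs!Suc j) \<and> Suc i < length xs} \<union>
     \<comment> \<open>(iii)\<close>
     {(DPath x y, {Asm (Arr x y)}) | x y. x \<in> V \<and> y \<in> V \<and> x \<noteq> y} \<union>
     {(DPath x z, {DPath x y, Asm (Arr y z)}) | x y z. x \<in> V \<and> y \<in> V \<and> z \<in> V \<and> y \<noteq> z} \<union>
     {(Edge x y, {Asm (Arr x y)}) | x y. x \<in> V \<and> y \<in> V \<and> x \<noteq> y} \<union>
     {(Edge x y, {Asm (Arr y x)}) | x y. x \<in> V \<and> y \<in> V \<and> x \<noteq> y} \<union>
     {(Ctr (Noe {x, y}), {Edge x y}) | x y. x \<in> V \<and> y \<in> V \<and> x \<noteq> y} \<union>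
     \<comment> \<open>(iv) Z-active x-y-collider-trees of any DAG on V\<close>
     {(Ctr (Ind {x, y} Z), arr_body Et) | x y Z EH Vt Et p.
        x \<in> V \<and> y \<in> V \<and> x \<noteq> y \<and> Z \<subseteq> V - {x, y} \<and> is_dag V EH \<and>
        active_collider_tree V EH x y Z Vt Et p}"

definition graph_of :: "'v sent set \<Rightarrow> ('v \<times> 'v) set" where
  "graph_of S = {(u, v). Asm (Arr u v) \<in> S}"

end

theory Submission
  imports Defs
begin

(* Let G be the graph of the arrows in S. Rule (ii) makes every directed cycle of arrows attack
   itself, so G is a DAG. An active x-y path of G, together with the directed paths leading down
   from its colliders, is an active collider tree inside G; by rule (iv) an independence assumption
   of S whose endpoints are d-connected in G would thus be attacked by S itself.
   Conversely, every attack on (x indep y | Z) is built from an active collider tree; since G is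
   asymmetric, a tree with all edges in G would yield an active path in G, so if x and y are
   d-separated in G the attack uses an arrow u -> v outside S. A stable extension therefore cannot
   attack the assumption and must contain it. A preferred extension decides every pair u, v (it
   contains arr_uv, arr_vu or noe_uv, since otherwise adding noe_uv keeps it admissible), so it
   counter-attacks arr_uv by rule (i), defends the assumption and, being complete, contains it. *)

section \<open>Admissible sets in ABA frameworks\<close>

lemma derivable_mono:
  assumes "derivable R As S q" "S \<subseteq> S'"
  shows "derivable R As S' q"
  using assms
proof induction
  case (leaf q)
  then show ?case by (blast intro: derivable.leaf)
next
  case (rule q B)
  then show ?case by (blast intro: derivable.rule)
qed

lemma derivable_by_rule:
  assumes "(q, B) \<in> R" "finite B" "B \<subseteq> S" "S \<subseteq> As"
  shows "derivable R As S q"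
  by (rule derivable.rule[OF assms(1,2)]) (meson assms(3,4) derivable.leaf subsetD)

lemma attacks_mono:
  "attacks R As ctr S T \<Longrightarrow> S \<subseteq> S' \<Longrightarrow> T \<subseteq> T' \<Longrightarrow> attacks R As ctr S' T'"
  unfolding attacks_def by (meson derivable_mono subsetD)

lemma attacks_Un:
  "attacks R As ctr S (T \<union> T') \<longleftrightarrow> attacks R As ctr S T \<or> attacks R As ctr S T'"
  unfolding attacks_def by blast

lemma admissible_Un_defended:
  assumes adm: "admissible R As ctr M" and def: "defends R As ctr M T" and "T \<subseteq> As"
  shows "admissible R As ctr (M \<union> T)"
proof -
  have MA: "M \<subseteq> As" and cf: "\<not> attacks R As ctr M M" and self_def: "defends R As ctr M M"
    using adm by (simp_all add: admissible_def conflict_free_def)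
  note defended = self_def[unfolded defends_def, rule_format] def[unfolded defends_def, rule_format]
  have MT: "M \<union> T \<subseteq> As" using MA \<open>T \<subseteq> As\<close> by blast
  have counter: "attacks R As ctr M U" if "U \<subseteq> As" "attacks R As ctr U (M \<union> T)" for U
    using that defended by (auto simp: attacks_Un)
  have "\<not> attacks R As ctr (M \<union> T) (M \<union> T)"
  proof
    assume "attacks R As ctr (M \<union> T) (M \<union> T)"
    then have "attacks R As ctr M M \<or> attacks R As ctr M T"
      using counter[OF MT] by (simp add: attacks_Un)
    then show False using cf defended(2)[OF MA] by blast
  qed
  moreover have "defends R As ctr (M \<union> T) (M \<union> T)"
    unfolding defends_def
  proof (intro allI impI)
    fix U assume "U \<subseteq> As" "attacks R As ctr U (M \<union> T)"
    then have "attacks R As ctr M U" by (rule counter)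
    then show "attacks R As ctr (M \<union> T) U" by (rule attacks_mono) simp_all
  qed
  ultimately show ?thesis using MT by (simp add: admissible_def conflict_free_def)
qed

lemma preferred_ext_maximal_admissible:
  assumes "finite As" and pref: "preferred_ext R As ctr S"
    and "admissible R As ctr T" "S \<subseteq> T"
  shows "T \<subseteq> S"
proof -
  have "{M. admissible R As ctr M} \<subseteq> Pow As" by (auto simp: admissible_def)
  then have "finite {M. admissible R As ctr M}"
    using \<open>finite As\<close> by (meson finite_Pow_iff finite_subset)
  then obtain M where M: "admissible R As ctr M" "T \<subseteq> M"
    and max: "\<And>M'. admissible R As ctr M' \<Longrightarrow> M \<subseteq> M' \<Longrightarrow> M = M'"
    using finite_has_maximal2[of _ T] \<open>admissible R As ctr T\<close> by (metis mem_Collect_eq)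
  have "complete_ext R As ctr M"
    unfolding complete_ext_def
  proof (intro conjI allI impI)
    fix U assume "U \<subseteq> As" "defends R As ctr M U"
    then show "U \<subseteq> M" using max admissible_Un_defended[OF M(1)] by blast
  qed (rule M(1))
  then show "T \<subseteq> S" using pref M(2) \<open>S \<subseteq> T\<close> unfolding preferred_ext_def by blast
qed

section \<open>Paths, colliders and d-separation\<close>

lemma acyclic_imp_asym: "acyclic r \<Longrightarrow> asym r"
  unfolding acyclic_def by (meson asymI r_into_trancl trancl_trans)

lemma is_path_mono: "is_path E p \<Longrightarrow> E \<subseteq> E' \<Longrightarrow> is_path E' p"
  unfolding is_path_def by blast

lemma is_path_restrict: "is_path E p \<Longrightarrow> set p \<subseteq> A \<Longrightarrow> is_path (E \<inter> A \<times> A) p"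
  unfolding is_path_def by (auto simp: subset_iff)

lemma is_dir_path_imp_is_path: "is_dir_path E p \<Longrightarrow> is_path E p"
  unfolding is_dir_path_def is_path_def by blast

lemma is_dir_path_restrict: "is_dir_path E p \<Longrightarrow> set p \<subseteq> A \<Longrightarrow> is_dir_path (E \<inter> A \<times> A) p"
  unfolding is_dir_path_def by (auto simp: subset_iff)

lemma descendant_mono: "descendant E a b \<Longrightarrow> E \<subseteq> E' \<Longrightarrow> descendant E' a b"
  unfolding descendant_def is_dir_path_def by blast

lemma descendant_of_dir_path_nth:
  assumes "is_dir_path E q" "k < length q"
  shows "descendant E (hd q) (q ! k)"
proof -
  have "is_dir_path E (take (Suc k) q)"
    using assms unfolding is_dir_path_def by auto
  moreover have "hd (take (Suc k) q) = hd q" "last (take (Suc k) q) = q ! k"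
    using assms by (auto simp: last_conv_nth is_dir_path_def)
  ultimately show ?thesis unfolding descendant_def by metis
qed

lemma is_path_set_subset:
  assumes "is_path E p" "E \<subseteq> V \<times> V" "hd p \<in> V"
  shows "set p \<subseteq> V"
proof
  fix w assume "w \<in> set p"
  then obtain k where k: "k < length p" "w = p ! k" by (auto simp: in_set_conv_nth)
  show "w \<in> V"
  proof (cases k)
    case 0 then show ?thesis using k assms by (simp add: hd_conv_nth is_path_def)
  next
    case (Suc j)
    then have "(p ! j, w) \<in> E \<or> (w, p ! j) \<in> E" using k assms(1) unfolding is_path_def by blast
    then show ?thesis using assms(2) by blast
  qed
qed

lemma descendant_in_subset:
  assumes "descendant E c w" "E \<subseteq> V \<times> V" "c \<in> V"
  shows "w \<in> V"
  using assms is_path_set_subset[OF is_dir_path_imp_is_path]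
  unfolding descendant_def is_dir_path_def by (metis last_in_set subsetD)

lemma collider_at_mono: "collider_at E p i \<Longrightarrow> E \<subseteq> E' \<Longrightarrow> collider_at E' p i"
  unfolding collider_at_def by blast

lemma collider_at_subgraph_iff:
  assumes "is_path E p" "E \<subseteq> G" "asym G"
  shows "collider_at E p i \<longleftrightarrow> collider_at G p i"
proof
  assume "collider_at G p i"
  then obtain j where j: "i = Suc j" "Suc i < length p"
    and into: "(p ! j, p ! i) \<in> G" "(p ! Suc i, p ! i) \<in> G"
    unfolding collider_at_def by (cases i) simp_all
  have "(p ! j, p ! i) \<in> E \<or> (p ! i, p ! j) \<in> E" "(p ! i, p ! Suc i) \<in> E \<or> (p ! Suc i, p ! i) \<in> E"
    using assms(1) j unfolding is_path_def by (metis Suc_lessD)+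
  moreover have "(p ! i, p ! j) \<notin> E" "(p ! i, p ! Suc i) \<notin> E"
    using into assms(2,3) by (meson asymD subsetD)+
  ultimately show "collider_at E p i"
    using j unfolding collider_at_def by simp
next
  assume "collider_at E p i"
  then show "collider_at G p i" using assms(2) by (rule collider_at_mono)
qed

lemma collider_at_restrict_iff:
  assumes "set p \<subseteq> A"
  shows "collider_at (G \<inter> A \<times> A) p i \<longleftrightarrow> collider_at G p i"
  using assms unfolding collider_at_def by (auto simp: subset_iff)

lemma active_transfer:
  assumes "active E Z p"
    and "\<And>i. collider_at E' p i \<longleftrightarrow> collider_at E p i"
    and "\<And>i z. collider_at E p i \<Longrightarrow> descendant E (p ! i) z \<Longrightarrow> descendant E' (p ! i) z"
  shows "active E' Z p"
  using assms unfolding active_def by blast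

lemma is_path_rev:
  assumes "is_path E p"
  shows "is_path E (rev p)"
  unfolding is_path_def
proof (intro conjI allI impI)
  show "rev p \<noteq> []" "distinct (rev p)" using assms unfolding is_path_def by simp_all
  fix i assume i: "Suc i < length (rev p)"
  define j where "j = length p - 2 - i"
  have "Suc j < length p" "rev p ! i = p ! Suc j" "rev p ! Suc i = p ! j"
    using i by (auto simp: rev_nth j_def Suc_diff_Suc numeral_2_eq_2)
  then show "(rev p ! i, rev p ! Suc i) \<in> E \<or> (rev p ! Suc i, rev p ! i) \<in> E"
    using assms unfolding is_path_def by auto
qed

lemma collider_at_imp_collider_at_rev:
  assumes "collider_at E p j"
  shows "collider_at E (rev p) (length p - 1 - j)"
proof -
  have j: "0 < j" "Suc j < length p" and "(p ! (j - 1), p ! j) \<in> E" "(p ! Suc j, p ! j) \<in> E"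
    using assms unfolding collider_at_def by simp_all
  moreover have "rev p ! (length p - 1 - j - 1) = p ! Suc j"
    "rev p ! (length p - 1 - j) = p ! j" "rev p ! Suc (length p - 1 - j) = p ! (j - 1)"
    using j by (simp_all add: rev_nth Suc_diff_Suc)
  ultimately show ?thesis unfolding collider_at_def by simp
qed

lemma collider_at_rev:
  assumes "i < length p"
  shows "collider_at E (rev p) i \<longleftrightarrow> collider_at E p (length p - 1 - i)"
  using collider_at_imp_collider_at_rev[of E p "length p - 1 - i"] collider_at_imp_collider_at_rev[of E "rev p" i] assms
  by auto

lemma active_rev: "active E Z p \<Longrightarrow> active E Z (rev p)"
  unfolding active_def by (auto simp: collider_at_rev rev_nth)

lemma d_separated_sym: "d_separated E x y Z \<longleftrightarrow> d_separated E y x Z"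
proof -
  have "\<not> d_separated E y x Z" if connected: "\<not> d_separated E x y Z" for x y
  proof -
    obtain p where p: "is_path E p" "hd p = x" "last p = y" "active E Z p"
      using connected unfolding d_separated_def by blast
    then have "p \<noteq> []" unfolding is_path_def by simp
    then show ?thesis
      using p is_path_rev active_rev unfolding d_separated_def by (metis hd_rev last_rev)
  qed
  then show ?thesis by blast
qed

lemma active_collider_tree_imp_not_d_separated:
  assumes tree: "active_collider_tree V EH x y Z Vt Et p" and "Et \<subseteq> G" "asym G"
  shows "\<not> d_separated G x y Z"
proof -
  have p: "is_path Et p" "hd p = x" "last p = y" "active Et Z p"
    using tree unfolding active_collider_tree_def collider_tree_def by simp_all
  have "active G Z p"
    using collider_at_subgraph_iff[OF p(1) assms(2,3)] descendant_mono[OF _ assms(2)]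
    by (intro active_transfer[OF p(4)]) simp_all
  moreover have "is_path G p" using p(1) assms(2) by (rule is_path_mono)
  ultimately show ?thesis using p(2,3) unfolding d_separated_def by blast
qed

lemma active_path_imp_active_collider_tree:
  assumes p: "is_path G p" "hd p = x" "last p = y" "active G Z p"
    and G: "G \<subseteq> V \<times> V" and "x \<in> V"
  shows "\<exists>Vt Et. active_collider_tree V G x y Z Vt Et p"
proof -
  define Vt where "Vt = set p \<union> {w. \<exists>i. collider_at G p i \<and> descendant G (p ! i) w}"
  define Et where "Et = G \<inter> Vt \<times> Vt"
  have "set p \<subseteq> Vt" unfolding Vt_def by blast
  then have colliders: "collider_at Et p i \<longleftrightarrow> collider_at G p i" for i
    unfolding Et_def by (rule collider_at_restrict_iff)
  have descendants: "descendant Et (p ! i) w"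
    if collider: "collider_at G p i" and "descendant G (p ! i) w" for i w
  proof -
    obtain q where q: "is_dir_path G q" "hd q = p ! i" "last q = w"
      using \<open>descendant G (p ! i) w\<close> unfolding descendant_def by blast
    have "set q \<subseteq> Vt"
      using collider descendant_of_dir_path_nth[OF q(1)] q(2)
      unfolding Vt_def by (fastforce simp: in_set_conv_nth)
    then have "is_dir_path Et q" unfolding Et_def by (rule is_dir_path_restrict[OF q(1)])
    then show ?thesis using q(2,3) unfolding descendant_def by blast
  qed
  have "set p \<subseteq> V" using is_path_set_subset p(1,2) G \<open>x \<in> V\<close> by blast
  moreover have "p ! i \<in> set p" if "collider_at G p i" for i
    using that unfolding collider_at_def by simp
  ultimately have "Vt \<subseteq> V"
    using descendant_in_subset[OF _ G] unfolding Vt_def by blast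
  then have "collider_tree V G x y Vt Et p"
    using is_path_restrict[OF p(1) \<open>set p \<subseteq> Vt\<close>] \<open>set p \<subseteq> Vt\<close> p(2,3) colliders descendants
    unfolding collider_tree_def Et_def Vt_def by auto
  moreover have "active Et Z p"
    using colliders descendants by (intro active_transfer[OF p(4)]) simp_all
  ultimately show ?thesis unfolding active_collider_tree_def by blast
qed

lemma ds_rule_exclusive:
  assumes "x \<in> V" "y \<in> V" "x \<noteq> y"
    and "a \<in> {Arr x y, Arr y x, Noe {x, y}}" "b \<in> {Arr x y, Arr y x, Noe {x, y}}" "a \<noteq> b"
  shows "(Ctr a, {Asm b}) \<in> ds_rules V"
  using assms unfolding ds_rules_def by (intro UnI1) blast

lemma ds_rule_cycle:
  assumes "0 < n" "f n = f 0" "\<And>i. i < n \<Longrightarrow> f i \<in> V \<and> f i \<noteq> f (Suc i)"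
  shows "(Ctr (Arr (f 0) (f 1)), (\<lambda>i. Asm (Arr (f i) (f (Suc i)))) ` {..<n}) \<in> ds_rules V"
proof -
  define xs where "xs = map f [0..<Suc n]"
  have len: "length xs = Suc n" unfolding xs_def by simp
  have nth: "xs ! i = f i" if "i \<le> n" for i
    using that unfolding xs_def by (simp add: nth_map_upt less_Suc_eq_le del: upt_Suc)
  have "xs \<noteq> []" "Suc 0 < length xs" using assms(1) len by auto
  moreover have "hd xs = last xs"
    using assms(2) \<open>xs \<noteq> []\<close> by (simp add: hd_conv_nth last_conv_nth len nth)
  moreover have "\<forall>j. Suc j < length xs \<longrightarrow> xs ! j \<noteq> xs ! Suc j"
    using assms(3) by (simp add: len nth)
  moreover have "set xs \<subseteq> V"
  proof
    fix w assume "w \<in> set xs"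
    then obtain i where "i \<le> n" "w = f i" by (auto simp: in_set_conv_nth len nth less_Suc_eq_le)
    then show "w \<in> V" using assms by (cases "i = n") auto
  qed
  ultimately have "(Ctr (Arr (xs ! 0) (xs ! Suc 0)), {Asm (Arr (xs ! j) (xs ! Suc j)) | j. Suc j < length xs})
      \<in> ds_rules V"
    unfolding ds_rules_def by (intro UnI1 UnI2) blast
  moreover have "{Asm (Arr (xs ! j) (xs ! Suc j)) | j. Suc j < length xs}
      = (\<lambda>i. Asm (Arr (f i) (f (Suc i)))) ` {..<n}"
    by (force simp: len nth)
  ultimately show ?thesis using assms(1) by (simp add: nth)
qed

lemma ds_rule_collider_tree:
  assumes "x \<in> V" "y \<in> V" "x \<noteq> y" "Z \<subseteq> V - {x, y}" "is_dag V EH"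
    and "active_collider_tree V EH x y Z Vt Et p"
  shows "(Ctr (Ind {x, y} Z), arr_body Et) \<in> ds_rules V"
  using assms unfolding ds_rules_def by (intro UnI2) blast

lemma ds_rules_head_not_Asm: "(Asm a, B) \<notin> ds_rules V"
  unfolding ds_rules_def by auto

lemma ds_rules_Ctr_notin_body: "(q, B) \<in> ds_rules V \<Longrightarrow> Ctr a \<notin> B"
  unfolding ds_rules_def arr_body_def by auto

lemma ds_rules_Noe_in_body:
  "(q, B) \<in> ds_rules V \<Longrightarrow> Asm (Noe N) \<in> B \<Longrightarrow>
   \<exists>x y. x \<in> V \<and> y \<in> V \<and> x \<noteq> y \<and> N = {x, y} \<and> B = {Asm (Noe N)} \<and>
     (q = Ctr (Arr x y) \<or> q = Ctr (Arr y x))"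
  unfolding ds_rules_def arr_body_def by auto

lemma ds_rules_Edge_head:
  "(Edge x y, B) \<in> ds_rules V \<Longrightarrow> B = {Asm (Arr x y)} \<or> B = {Asm (Arr y x)}"
  unfolding ds_rules_def by auto

lemma ds_rules_Ctr_Noe_head:
  "(Ctr (Noe N), B) \<in> ds_rules V \<Longrightarrow>
   \<exists>x y. N = {x, y} \<and> (B = {Edge x y} \<or> B = {Asm (Arr x y)} \<or> B = {Asm (Arr y x)})"
  unfolding ds_rules_def by auto

lemma ds_rules_Ctr_Ind_head:
  "(Ctr (Ind N Z), B) \<in> ds_rules V \<Longrightarrow>
   \<exists>x y EH Vt Et p. N = {x, y} \<and> B = arr_body Et \<and> active_collider_tree V EH x y Z Vt Et p"
  unfolding ds_rules_def by auto blast

lemma ds_asms_subset_range_Asm: "ds_asms V \<subseteq> range Asm"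
  unfolding ds_asms_def by auto

lemma Arr_in_ds_asms_iff: "Asm (Arr u v) \<in> ds_asms V \<longleftrightarrow> u \<in> V \<and> v \<in> V \<and> u \<noteq> v"
  unfolding ds_asms_def by simp

lemma Noe_in_ds_asms: "u \<in> V \<Longrightarrow> v \<in> V \<Longrightarrow> u \<noteq> v \<Longrightarrow> Asm (Noe {u, v}) \<in> ds_asms V"
  unfolding ds_asms_def by blast

lemma Ind_in_ds_asms:
  "x \<in> V \<Longrightarrow> y \<in> V \<Longrightarrow> x \<noteq> y \<Longrightarrow> Z \<subseteq> V - {x, y} \<Longrightarrow> Asm (Ind {x, y} Z) \<in> ds_asms V"
  unfolding ds_asms_def by (intro UnI2) blast

lemma finite_ds_asms:
  assumes "finite V"
  shows "finite (ds_asms V)"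
proof -
  let ?U = "(\<lambda>(x, y). Arr x y) ` (V \<times> V) \<union> Noe ` Pow V \<union> (\<lambda>(N, Z). Ind N Z) ` (Pow V \<times> Pow V)"
  have "ds_asms V \<subseteq> Asm ` ?U" unfolding ds_asms_def by auto
  moreover have "finite (Asm ` ?U)" using assms by simp
  ultimately show ?thesis by (rule finite_subset)
qed

lemma attacks_AsmI: "derivable R As S (Ctr a) \<Longrightarrow> Asm a \<in> T \<Longrightarrow> attacks R As ds_ctr S T"
  unfolding attacks_def by (intro bexI[of _ "Asm a"]) simp_all

lemma derivable_Asm_imp_mem: "derivable (ds_rules V) As S (Asm a) \<Longrightarrow> Asm a \<in> S"
  by (erule derivable.cases) (auto simp: ds_rules_head_not_Asm)

lemma derivable_Ctr_imp_rule:
  assumes "derivable (ds_rules V) (ds_asms V) S (Ctr a)"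
  shows "\<exists>B. (Ctr a, B) \<in> ds_rules V \<and> finite B \<and> (\<forall>b\<in>B. derivable (ds_rules V) (ds_asms V) S b)"
  using assms
proof cases
  case leaf
  then show ?thesis using ds_asms_subset_range_Asm by blast
qed blast

lemma derivable_Edge_imp_Arr:
  assumes "derivable (ds_rules V) (ds_asms V) S (Edge x y)"
  shows "Asm (Arr x y) \<in> S \<or> Asm (Arr y x) \<in> S"
  using assms ds_asms_subset_range_Asm
  by cases (auto dest!: ds_rules_Edge_head intro: derivable_Asm_imp_mem)

lemma derivable_Ctr_Noe_imp_Arr:
  assumes "derivable (ds_rules V) (ds_asms V) S (Ctr (Noe {u, v}))"
  shows "Asm (Arr u v) \<in> S \<or> Asm (Arr v u) \<in> S"
proof -
  obtain B where B: "(Ctr (Noe {u, v}), B) \<in> ds_rules V"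
    and body: "\<forall>b\<in>B. derivable (ds_rules V) (ds_asms V) S b"
    using derivable_Ctr_imp_rule[OF assms] by blast
  obtain x y where "{u, v} = {x, y}" "B = {Edge x y} \<or> B = {Asm (Arr x y)} \<or> B = {Asm (Arr y x)}"
    using ds_rules_Ctr_Noe_head[OF B] by blast
  moreover have "Asm (Arr x y) \<in> S \<or> Asm (Arr y x) \<in> S"
    using \<open>B = {Edge x y} \<or> _\<close> body derivable_Edge_imp_Arr derivable_Asm_imp_mem by fastforce
  ultimately show ?thesis by (auto simp: doubleton_eq_iff)
qed

text \<open>Noe-assumptions occur only in the bodies of rules (i), which derive contraries of arrows; so
  adding one to a set can only create new attacks on arrows.\<close>

lemma derivable_insert_Noe_non_Ctr:
  assumes "derivable (ds_rules V) As (insert (Asm (Noe N)) S) q"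
    and "q \<notin> range Ctr" "q \<notin> range (Asm \<circ> Noe)"
  shows "derivable (ds_rules V) As S q"
  using assms
proof induction
  case (leaf q)
  then show ?case by (auto intro: derivable.leaf)
next
  case (rule q B)
  have "derivable (ds_rules V) As S b" if "b \<in> B" for b
  proof -
    have "b \<notin> range Ctr" using ds_rules_Ctr_notin_body[OF rule.hyps(1)] that by auto
    moreover have "b \<notin> range (Asm \<circ> Noe)"
    proof
      assume "b \<in> range (Asm \<circ> Noe)"
      then obtain N' where "b = Asm (Noe N')" by auto
      then show False using ds_rules_Noe_in_body[OF rule.hyps(1)] that rule.prems(1) by auto
    qed
    ultimately show ?thesis using rule.IH that by blast
  qed
  then show ?case by (intro derivable.rule[OF rule.hyps(1,2)] ballI)
qed

lemma derivable_Ctr_insert_Noe: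
  assumes "derivable (ds_rules V) (ds_asms V) (insert (Asm (Noe {u, v})) S) (Ctr a)"
  shows "derivable (ds_rules V) (ds_asms V) S (Ctr a) \<or> a = Arr u v \<or> a = Arr v u"
proof -
  obtain B where B: "(Ctr a, B) \<in> ds_rules V" "finite B"
    and body: "\<forall>b\<in>B. derivable (ds_rules V) (ds_asms V) (insert (Asm (Noe {u, v})) S) b"
    using derivable_Ctr_imp_rule[OF assms] by blast
  show ?thesis
  proof (cases "\<exists>N. Asm (Noe N) \<in> B")
    case True
    then obtain N x y where xy: "x \<in> V" "y \<in> V" "x \<noteq> y" and N: "N = {x, y}"
      and B_eq: "B = {Asm (Noe N)}" and a: "a = Arr x y \<or> a = Arr y x"
      using ds_rules_Noe_in_body[OF B(1)] by blast
    then have "Asm (Noe N) \<in> insert (Asm (Noe {u, v})) S"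
      using body derivable_Asm_imp_mem by blast
    then consider "Asm (Noe N) \<in> S" | "{x, y} = {u, v}" using N by blast
    then show ?thesis
    proof cases
      case 1
      then have "derivable (ds_rules V) (ds_asms V) S (Asm (Noe N))"
        using Noe_in_ds_asms[OF xy] N by (auto intro: derivable.leaf)
      then have "derivable (ds_rules V) (ds_asms V) S (Ctr a)"
        using B_eq by (intro derivable.rule[OF B]) simp
      then show ?thesis ..
    next
      case 2
      then show ?thesis using a by (auto simp: doubleton_eq_iff)
    qed
  next
    case False
    have "derivable (ds_rules V) (ds_asms V) S b" if "b \<in> B" for b
    proof (rule derivable_insert_Noe_non_Ctr)
      show "derivable (ds_rules V) (ds_asms V) (insert (Asm (Noe {u, v})) S) b"
        using body that by blast
      show "b \<notin> range Ctr" using ds_rules_Ctr_notin_body[OF B(1)] that by auto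
      show "b \<notin> range (Asm \<circ> Noe)" using False that by auto
    qed
    then show ?thesis by (intro disjI1 derivable.rule[OF B] ballI)
  qed
qed

lemma admissible_insert_Noe:
  assumes adm: "admissible (ds_rules V) (ds_asms V) ds_ctr S"
    and uv: "u \<in> V" "v \<in> V" "u \<noteq> v" and unoriented: "Asm (Arr u v) \<notin> S" "Asm (Arr v u) \<notin> S"
  shows "admissible (ds_rules V) (ds_asms V) ds_ctr (insert (Asm (Noe {u, v})) S)"
proof -
  let ?R = "ds_rules V" and ?A = "ds_asms V" and ?n = "Asm (Noe {u, v})"
  have SA: "S \<subseteq> ?A" and cf: "\<not> attacks ?R ?A ds_ctr S S" and def: "defends ?R ?A ds_ctr S S"
    using adm by (simp_all add: admissible_def conflict_free_def)
  have nA: "?n \<in> ?A" using uv by (rule Noe_in_ds_asms)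
  have "\<not> attacks ?R ?A ds_ctr (insert ?n S) (insert ?n S)"
  proof
    assume "attacks ?R ?A ds_ctr (insert ?n S) (insert ?n S)"
    then obtain s where s: "s \<in> insert ?n S" "derivable ?R ?A (insert ?n S) (ds_ctr s)"
      unfolding attacks_def by blast
    have "s \<in> ?A" using s(1) SA nA by blast
    then obtain a where "s = Asm a" using ds_asms_subset_range_Asm by blast
    with s have a: "Asm a \<in> insert ?n S" "derivable ?R ?A (insert ?n S) (Ctr a)"
      by simp_all
    from derivable_Ctr_insert_Noe[OF a(2)] show False
    proof (elim disjE)
      assume d: "derivable ?R ?A S (Ctr a)"
      show False
      proof (cases "a = Noe {u, v}")
        case True
        with d have "derivable ?R ?A S (Ctr (Noe {u, v}))" by simp
        then show False using unoriented by (auto dest: derivable_Ctr_Noe_imp_Arr)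
      next
        case False
        then have "Asm a \<in> S" using a(1) by simp
        with d have "attacks ?R ?A ds_ctr S S" by (rule attacks_AsmI)
        then show False using cf by contradiction
      qed
    qed (use a(1) unoriented in simp_all)
  qed
  moreover have "defends ?R ?A ds_ctr (insert ?n S) (insert ?n S)"
    unfolding defends_def
  proof (intro allI impI)
    fix U assume U: "U \<subseteq> ?A" "attacks ?R ?A ds_ctr U (insert ?n S)"
    then have "derivable ?R ?A U (Ctr (Noe {u, v})) \<or> attacks ?R ?A ds_ctr U S"
      unfolding attacks_def by simp
    then show "attacks ?R ?A ds_ctr (insert ?n S) U"
    proof
      assume "derivable ?R ?A U (Ctr (Noe {u, v}))"
      then have "Asm (Arr u v) \<in> U \<or> Asm (Arr v u) \<in> U" by (rule derivable_Ctr_Noe_imp_Arr)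
      then obtain a where "Asm a \<in> U" and a: "a = Arr u v \<or> a = Arr v u" by blast
      have "(Ctr a, {?n}) \<in> ?R" using a by (intro ds_rule_exclusive[OF uv]) auto
      then have "derivable ?R ?A (insert ?n S) (Ctr a)"
        by (rule derivable_by_rule) (use SA nA in auto)
      then show ?thesis using \<open>Asm a \<in> U\<close> by (rule attacks_AsmI)
    next
      assume "attacks ?R ?A ds_ctr U S"
      then have "attacks ?R ?A ds_ctr S U" using def U(1) unfolding defends_def by blast
      then show ?thesis by (rule attacks_mono) auto
    qed
  qed
  ultimately show ?thesis using SA nA by (simp add: admissible_def conflict_free_def)
qed

lemma preferred_ext_orients_or_separates:
  assumes "finite V" and pref: "preferred_ext (ds_rules V) (ds_asms V) ds_ctr S"
    and "u \<in> V" "v \<in> V" "u \<noteq> v"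
  shows "Asm (Arr u v) \<in> S \<or> Asm (Arr v u) \<in> S \<or> Asm (Noe {u, v}) \<in> S"
proof (rule ccontr)
  assume undecided: "\<not> ?thesis"
  have "admissible (ds_rules V) (ds_asms V) ds_ctr S"
    using pref by (simp add: preferred_ext_def complete_ext_def)
  then have "admissible (ds_rules V) (ds_asms V) ds_ctr (insert (Asm (Noe {u, v})) S)"
    using assms(3-5) undecided by (intro admissible_insert_Noe) simp_all
  then have "insert (Asm (Noe {u, v})) S \<subseteq> S"
    by (rule preferred_ext_maximal_admissible[OF finite_ds_asms[OF \<open>finite V\<close>] pref]) blast
  then show False using undecided by blast
qed

section \<open>Independence assumptions and d-separation\<close>

lemma graph_of_edge:
  "S \<subseteq> ds_asms V \<Longrightarrow> (u, v) \<in> graph_of S \<Longrightarrow> u \<in> V \<and> v \<in> V \<and> u \<noteq> v"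
  unfolding graph_of_def using Arr_in_ds_asms_iff[of u v V] by auto

lemma acyclic_graph_of:
  assumes adm: "admissible (ds_rules V) (ds_asms V) ds_ctr S"
  shows "acyclic (graph_of S)"
  unfolding acyclic_def
proof (intro allI notI)
  fix a assume "(a, a) \<in> (graph_of S)\<^sup>+"
  then obtain n where "0 < n" "(a, a) \<in> graph_of S ^^ n" by (auto simp: trancl_power)
  then obtain f where "f 0 = a" "f n = a" and "\<forall>i<n. (f i, f (Suc i)) \<in> graph_of S"
    by (auto simp: relpow_fun_conv)
  then have edges: "Asm (Arr (f i) (f (Suc i))) \<in> S" if "i < n" for i
    using that by (simp add: graph_of_def)
  have SA: "S \<subseteq> ds_asms V" using adm by (simp add: admissible_def)
  have "f i \<in> V \<and> f i \<noteq> f (Suc i)" if "i < n" for i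
    using Arr_in_ds_asms_iff[of "f i" "f (Suc i)" V] edges[OF that] SA by auto
  then have "(Ctr (Arr (f 0) (f 1)), (\<lambda>i. Asm (Arr (f i) (f (Suc i)))) ` {..<n}) \<in> ds_rules V"
    by (intro ds_rule_cycle) (simp_all add: \<open>0 < n\<close> \<open>f 0 = a\<close> \<open>f n = a\<close>)
  then have "derivable (ds_rules V) (ds_asms V) S (Ctr (Arr (f 0) (f 1)))"
    by (rule derivable_by_rule) (use edges SA in auto)
  moreover have "Asm (Arr (f 0) (f 1)) \<in> S" using edges[OF \<open>0 < n\<close>] by simp
  ultimately have "attacks (ds_rules V) (ds_asms V) ds_ctr S S" by (rule attacks_AsmI)
  then show False using adm by (simp add: admissible_def conflict_free_def)
qed

lemma attack_on_Ind_needs_missing_arrow: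
  assumes "derivable (ds_rules V) (ds_asms V) U (Ctr (Ind {x, y} Z))"
    and "d_separated G x y Z" "asym G"
  shows "\<exists>u v. Asm (Arr u v) \<in> U \<and> (u, v) \<notin> G"
proof -
  obtain B where B: "(Ctr (Ind {x, y} Z), B) \<in> ds_rules V"
    and body: "\<forall>b\<in>B. derivable (ds_rules V) (ds_asms V) U b"
    using derivable_Ctr_imp_rule[OF assms(1)] by blast
  then obtain x' y' EH Vt Et p where "{x, y} = {x', y'}" "B = arr_body Et"
    and tree: "active_collider_tree V EH x' y' Z Vt Et p"
    using ds_rules_Ctr_Ind_head by blast
  have "d_separated G x' y' Z"
    using assms(2) \<open>{x, y} = {x', y'}\<close> d_separated_sym by (metis doubleton_eq_iff)
  then have "\<not> Et \<subseteq> G"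
    using active_collider_tree_imp_not_d_separated[OF tree _ assms(3)] by blast
  then obtain u v where "(u, v) \<in> Et" "(u, v) \<notin> G" by auto
  moreover have "Asm (Arr u v) \<in> U"
    using body \<open>B = arr_body Et\<close> \<open>(u, v) \<in> Et\<close> derivable_Asm_imp_mem
    unfolding arr_body_def by blast
  ultimately show ?thesis by blast
qed

lemma Ind_mem_imp_d_separated:
  assumes "finite V" and adm: "admissible (ds_rules V) (ds_asms V) ds_ctr S"
    and xyZ: "x \<in> V" "y \<in> V" "x \<noteq> y" "Z \<subseteq> V - {x, y}"
    and Ind: "Asm (Ind {x, y} Z) \<in> S"
  shows "d_separated (graph_of S) x y Z"
proof (rule ccontr)
  let ?G = "graph_of S"
  have SA: "S \<subseteq> ds_asms V" using adm by (simp add: admissible_def)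
  have G: "?G \<subseteq> V \<times> V" using graph_of_edge[OF SA] by auto
  assume "\<not> d_separated ?G x y Z"
  then obtain p where p: "is_path ?G p" "hd p = x" "last p = y" "active ?G Z p"
    unfolding d_separated_def by blast
  obtain Vt Et where tree: "active_collider_tree V ?G x y Z Vt Et p"
    using active_path_imp_active_collider_tree[OF p G \<open>x \<in> V\<close>] by blast
  have "is_dag V ?G" using G acyclic_graph_of[OF adm] by (simp add: is_dag_def)
  then have "(Ctr (Ind {x, y} Z), arr_body Et) \<in> ds_rules V"
    by (rule ds_rule_collider_tree[OF xyZ _ tree])
  moreover have "Et \<subseteq> ?G"
    using tree by (simp add: active_collider_tree_def collider_tree_def)
  then have "arr_body Et \<subseteq> S" by (auto simp: arr_body_def graph_of_def)
  moreover have "finite (arr_body Et)"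
    using \<open>arr_body Et \<subseteq> S\<close> SA finite_ds_asms[OF \<open>finite V\<close>] by (auto intro: finite_subset)
  ultimately have "derivable (ds_rules V) (ds_asms V) S (Ctr (Ind {x, y} Z))"
    using SA by (intro derivable_by_rule)
  then have "attacks (ds_rules V) (ds_asms V) ds_ctr S S" using Ind by (rule attacks_AsmI)
  then show False using adm by (simp add: admissible_def conflict_free_def)
qed

lemma preferred_ext_defends_d_separated:
  assumes "finite V" and pref: "preferred_ext (ds_rules V) (ds_asms V) ds_ctr S"
    and "d_separated (graph_of S) x y Z"
  shows "defends (ds_rules V) (ds_asms V) ds_ctr S {Asm (Ind {x, y} Z)}"
  unfolding defends_def
proof (intro allI impI)
  fix U assume U: "U \<subseteq> ds_asms V" "attacks (ds_rules V) (ds_asms V) ds_ctr U {Asm (Ind {x, y} Z)}"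
  have adm: "admissible (ds_rules V) (ds_asms V) ds_ctr S"
    using pref by (simp add: preferred_ext_def complete_ext_def)
  then have SA: "S \<subseteq> ds_asms V" by (simp add: admissible_def)
  from U(2) have "derivable (ds_rules V) (ds_asms V) U (Ctr (Ind {x, y} Z))"
    unfolding attacks_def by simp
  then have "\<exists>u v. Asm (Arr u v) \<in> U \<and> (u, v) \<notin> graph_of S"
    by (rule attack_on_Ind_needs_missing_arrow[OF _ assms(3) acyclic_imp_asym[OF acyclic_graph_of[OF adm]]])
  then obtain u v where uU: "Asm (Arr u v) \<in> U" and "Asm (Arr u v) \<notin> S"
    by (auto simp: graph_of_def)
  have uv: "u \<in> V" "v \<in> V" "u \<noteq> v"
    using Arr_in_ds_asms_iff[of u v V] U(1) uU by auto
  then obtain b where "Asm b \<in> S" and b: "b = Arr v u \<or> b = Noe {u, v}"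
    using preferred_ext_orients_or_separates[OF assms(1) pref uv] \<open>Asm (Arr u v) \<notin> S\<close> by blast
  have "(Ctr (Arr u v), {Asm b}) \<in> ds_rules V"
    using b by (intro ds_rule_exclusive[OF uv]) (use uv(3) in auto)
  then have "derivable (ds_rules V) (ds_asms V) S (Ctr (Arr u v))"
    by (rule derivable_by_rule) (use \<open>Asm b \<in> S\<close> SA in auto)
  then show "attacks (ds_rules V) (ds_asms V) ds_ctr S U" using uU by (rule attacks_AsmI)
qed

lemma admissible_not_attacks_d_separated:
  assumes adm: "admissible (ds_rules V) (ds_asms V) ds_ctr S"
    and "d_separated (graph_of S) x y Z"
  shows "\<not> attacks (ds_rules V) (ds_asms V) ds_ctr S {Asm (Ind {x, y} Z)}"
  using attack_on_Ind_needs_missing_arrow[OF _ assms(2) acyclic_imp_asym[OF acyclic_graph_of[OF adm]]]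
  unfolding attacks_def graph_of_def by auto

lemma d_separated_imp_Ind_mem:
  assumes "finite V"
    and ext: "preferred_ext (ds_rules V) (ds_asms V) ds_ctr S \<or> stable_ext (ds_rules V) (ds_asms V) ds_ctr S"
    and Ind: "Asm (Ind {x, y} Z) \<in> ds_asms V" and ds: "d_separated (graph_of S) x y Z"
  shows "Asm (Ind {x, y} Z) \<in> S"
  using ext
proof
  assume pref: "preferred_ext (ds_rules V) (ds_asms V) ds_ctr S"
  then have "\<forall>T \<subseteq> ds_asms V. defends (ds_rules V) (ds_asms V) ds_ctr S T \<longrightarrow> T \<subseteq> S"
    by (simp add: preferred_ext_def complete_ext_def)
  then show ?thesis using preferred_ext_defends_d_separated[OF assms(1) pref ds] Ind by blast
next
  assume stable: "stable_ext (ds_rules V) (ds_asms V) ds_ctr S"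
  then have "admissible (ds_rules V) (ds_asms V) ds_ctr S" by (simp add: stable_ext_def)
  then show ?thesis
    using admissible_not_attacks_d_separated[OF _ ds] stable Ind by (auto simp: stable_ext_def)
qed

theorem proposition2:
  fixes V :: "'v set" and S :: "'v sent set"
  assumes "finite V"
    and "preferred_ext (ds_rules V) (ds_asms V) ds_ctr S \<or> stable_ext (ds_rules V) (ds_asms V) ds_ctr S"
  shows "\<forall>x\<in>V. \<forall>y\<in>V. \<forall>Z. x \<noteq> y \<and> Z \<subseteq> V - {x, y} \<longrightarrow>
           (Asm (Ind {x, y} Z) \<in> S \<longleftrightarrow> d_separated (graph_of S) x y Z)"
proof (intro ballI allI impI)
  fix x y Z assume x: "x \<in> V" and y: "y \<in> V" and "x \<noteq> y \<and> Z \<subseteq> V - {x, y}"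
  then have xy: "x \<noteq> y" and Z: "Z \<subseteq> V - {x, y}" by auto
  have adm: "admissible (ds_rules V) (ds_asms V) ds_ctr S"
    using assms(2) by (auto simp: preferred_ext_def complete_ext_def stable_ext_def)
  show "Asm (Ind {x, y} Z) \<in> S \<longleftrightarrow> d_separated (graph_of S) x y Z"
  proof
    assume "Asm (Ind {x, y} Z) \<in> S"
    then show "d_separated (graph_of S) x y Z"
      by (rule Ind_mem_imp_d_separated[OF assms(1) adm x y xy Z])
  next
    assume "d_separated (graph_of S) x y Z"
    then show "Asm (Ind {x, y} Z) \<in> S"
      by (rule d_separated_imp_Ind_mem[OF assms Ind_in_ds_asms[OF x y xy Z]])
  qed
qed

end
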